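(* With the notation below, let $D\in\mathrm{Div}(C_p)$. (i) If $\deg(D)<0$ then $H^0(D)=\{-\infty\}$. (ii) If $\deg(D)>0$ then $H^0(D)$ contains a real-valued function, i.e. $H^0(D)\neq\{-\infty\}$.
   Context: Let $p$ be a prime, $H_p=\mathbb{Z}[1/p]$. $C_p$ is the set of subgroups $H=\lambda H_p\subset\mathbb{R}$, $\lambda>0$. $\mathcal K(C_p)$: continuous piecewise affine $f:(0,\infty)\to\mathbb{R}$ with slopes in $H_p$ and $f(p\lambda)=f(\lambda)$, plus the constant $-\infty$. For real-valued $f$ and $H=\lambda H_p$, $\mathrm{Ord}_H(f)=h_+-h_-$, $h_\pm=\lim_{\epsilon\to0\pm}(f((1+\epsilon)\lambda)-f(\lambda))/\epsilon\in H$, and the principal divisor is $(f)(H)=\mathrm{Ord}_H(f)$. A divisor $D$ assigns $D(H)\in H$ to each $H\in C_p$, zero for all but finitely many $H$; $\mathrm{Div}(C_p)$ is the group of divisors, ordered pointwise; $\deg(D)=\sum_HD(H)$. $H^0(D)=\{f\in\mathcal K(C_p)\text{ real-valued}\mid D+(f)\geq0\}\cup\{-\infty\}$. *)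

theory Defs
  imports "HOL-Analysis.Analysis"
begin

definition Hp :: "nat \<Rightarrow> real set" where
  "Hp p = {of_int a / (of_nat p) ^ n | a n. True}"

definition Cp :: "nat \<Rightarrow> real set set" where
  "Cp p = {(\<lambda>x. l * x) ` Hp p | l. l > 0}"

definition pw_affine_Hp :: "nat \<Rightarrow> (real \<Rightarrow> real) \<Rightarrow> bool" where
  "pw_affine_Hp p f \<longleftrightarrow>
     continuous_on {0<..} f \<and>
     (\<forall>a b. 0 < a \<and> a < b \<longrightarrow>
        (\<exists>S. finite S \<and> a \<in> S \<and> b \<in> S \<and> S \<subseteq> {a..b} \<and>
          (\<forall>x\<in>S. \<forall>y\<in>S. x < y \<and> {x<..<y} \<inter> S = {} \<longrightarrow>
             (\<exists>s c. s \<in> Hp p \<and> (\<forall>t\<in>{x..y}. f t = s * t + c)))))"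

definition Kreal :: "nat \<Rightarrow> (real \<Rightarrow> real) set" where
  "Kreal p = {f. pw_affine_Hp p f \<and> (\<forall>l>0. f (real p * l) = f l)}"

definition K :: "nat \<Rightarrow> (real \<Rightarrow> ereal) set" where
  "K p = {(\<lambda>x. ereal (f x)) | f. f \<in> Kreal p} \<union> {\<lambda>_. -\<infinity>}"

text \<open>Ord_H(f) computed at the representative lambda of H = lambda H_p.\<close>
definition Ord_at :: "(real \<Rightarrow> real) \<Rightarrow> real \<Rightarrow> real" where
  "Ord_at f l =
     Lim (at_right 0) (\<lambda>e. (f ((1 + e) * l) - f l) / e)
   - Lim (at_left 0) (\<lambda>e. (f ((1 + e) * l) - f l) / e)"

definition rep :: "nat \<Rightarrow> real set \<Rightarrow> real" where
  "rep p H = (SOME l. l > 0 \<and> H = (\<lambda>x. l * x) ` Hp p)"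

definition pdiv :: "nat \<Rightarrow> (real \<Rightarrow> real) \<Rightarrow> real set \<Rightarrow> real" where
  "pdiv p f H = (if H \<in> Cp p then Ord_at f (rep p H) else 0)"

definition is_divisor :: "nat \<Rightarrow> (real set \<Rightarrow> real) \<Rightarrow> bool" where
  "is_divisor p D \<longleftrightarrow>
     (\<forall>H\<in>Cp p. D H \<in> H) \<and> (\<forall>H. H \<notin> Cp p \<longrightarrow> D H = 0) \<and> finite {H. D H \<noteq> 0}"

definition deg :: "(real set \<Rightarrow> real) \<Rightarrow> real" where
  "deg D = (\<Sum>H\<in>{H. D H \<noteq> 0}. D H)"

definition H0 :: "nat \<Rightarrow> (real set \<Rightarrow> real) \<Rightarrow> (real \<Rightarrow> ereal) set" where
  "H0 p D = {(\<lambda>x. ereal (f x)) | f. f \<in> Kreal p \<and> (\<forall>H\<in>Cp p. D H + pdiv p f H \<ge> 0)}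
            \<union> {\<lambda>_. -\<infinity>}"

end

theory Submission
  imports Defs
begin

text \<open>On every compact interval an element \<open>f\<close> of \<open>K(C_p)\<close> is an affine function plus a finite
  combination of ramps \<open>max 0 (t - v)\<close>, and \<open>Ord\<^sub>v f\<close> is \<open>v\<close> times the coefficient of the ramp at \<open>v\<close>
  (the jump of slope). Summed over the fundamental domain \<open>(1, p]\<close>, these orders telescope to
  \<open>p f'(p) - f'(1) - (f(p) - f(1))\<close>, which vanishes because \<open>f(p t) = f(t)\<close>. So principal divisors
  have degree \<open>0\<close>, and \<open>D + (f) \<ge> 0\<close> forces \<open>deg D \<ge> 0\<close>.

  Conversely, periodizing a tent \<open>s\<cdot>ramp\<^sub>y - (s + r)\<cdot>ramp\<^sub>u + r\<cdot>ramp\<^sub>z\<close> over \<open>p\<^sup>\<int>\<close> gives an element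
  of \<open>K(C_p)\<close> whose divisor moves degree from the point of \<open>u\<close> to the point of \<open>z\<close>, at a price only
  slightly above the amount moved, since \<open>H_p\<close> is dense. When \<open>deg D > 0\<close> the positive part of \<open>D\<close>
  can afford such transfers cancelling its negative part, and the sum of the tents lies in
  \<open>H\<^sup>0(D)\<close>.\<close>

section \<open>The group \<open>H_p\<close> and the points of \<open>C_p\<close>\<close>

lemma Hp_iff: "h \<in> Hp p \<longleftrightarrow> (\<exists>a n. h = of_int a / of_nat p ^ n)"
  unfolding Hp_def by auto

lemma Hp_0 [simp]: "0 \<in> Hp p"
  unfolding Hp_iff by (rule exI[of _ 0], rule exI[of _ 0]) simp

lemma Hp_1 [simp]: "1 \<in> Hp p"
  unfolding Hp_iff by (rule exI[of _ 1], rule exI[of _ 0]) simp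

lemma Hp_add:
  assumes "p > 0" "x \<in> Hp p" "y \<in> Hp p"
  shows "x + y \<in> Hp p"
proof -
  obtain a n where x: "x = of_int a / of_nat p ^ n" using assms Hp_iff by blast
  obtain b m where y: "y = of_int b / of_nat p ^ m" using assms Hp_iff by blast
  have "x + y = of_int (a * int p ^ m + b * int p ^ n) / of_nat p ^ (n + m)"
    using assms(1) by (simp add: x y field_simps power_add)
  then show ?thesis unfolding Hp_iff by blast
qed

lemma Hp_uminus:
  assumes "x \<in> Hp p"
  shows "- x \<in> Hp p"
proof -
  obtain a n where "x = of_int a / of_nat p ^ n" using assms Hp_iff by blast
  then have "- x = of_int (- a) / of_nat p ^ n" by simp
  then show ?thesis unfolding Hp_iff by blast
qed

lemma Hp_diff:
  assumes "p > 0" "x \<in> Hp p" "y \<in> Hp p"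
  shows "x - y \<in> Hp p"
  using Hp_add[OF assms(1,2) Hp_uminus[OF assms(3)]] by simp

lemma Hp_mult:
  assumes "x \<in> Hp p" "y \<in> Hp p"
  shows "x * y \<in> Hp p"
proof -
  obtain a n where x: "x = of_int a / of_nat p ^ n" using assms Hp_iff by blast
  obtain b m where y: "y = of_int b / of_nat p ^ m" using assms Hp_iff by blast
  have "x * y = of_int (a * b) / of_nat p ^ (n + m)"
    by (simp add: x y power_add)
  then show ?thesis unfolding Hp_iff by blast
qed

lemma Hp_sum:
  assumes "p > 0" "\<And>j. j \<in> J \<Longrightarrow> c j \<in> Hp p"
  shows "(\<Sum>j\<in>J. c j) \<in> Hp p"
  using assms(2)
proof (induction J rule: infinite_finite_induct)
  case (insert x F)
  then show ?case by (simp add: Hp_add[OF assms(1)])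
qed auto

lemma powr_of_int_eq:
  assumes "x > (0::real)"
  shows "x powr of_int k = (if k \<ge> 0 then x ^ nat k else 1 / x ^ nat (- k))"
  using assms
  by (auto simp: powr_realpow[symmetric] powr_minus_divide[symmetric] simp del: powr_minus_divide)

lemma Hp_powr:
  assumes "p > 0"
  shows "real p powr of_int k \<in> Hp p"
proof -
  have "real p ^ n \<in> Hp p" "1 / real p ^ n \<in> Hp p" for n
    unfolding Hp_iff by (metis of_int_of_nat_eq of_int_power div_by_1 power_0 of_int_1)+
  then show ?thesis using assms by (simp add: powr_of_int_eq)
qed

lemma Hp_dense:
  assumes "p > 1" "\<alpha> < \<beta>"
  shows "\<exists>h\<in>Hp p. \<alpha> < h \<and> h < \<beta>"
proof -
  obtain n where n: "1 / (\<beta> - \<alpha>) < real p ^ n"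
    using real_arch_pow[of "real p" "1 / (\<beta> - \<alpha>)"] assms by auto
  have pn: "real p ^ n > 0" using assms by simp
  have big: "(\<beta> - \<alpha>) * real p ^ n > 1"
    using n assms by (simp add: field_simps)
  define a where "a = \<lfloor>\<alpha> * real p ^ n\<rfloor> + 1"
  have "\<alpha> * real p ^ n < of_int a" "of_int a < \<beta> * real p ^ n"
    unfolding a_def using big by (simp_all add: algebra_simps) linarith+
  then have "\<alpha> < of_int a / real p ^ n" "of_int a / real p ^ n < \<beta>"
    using pn by (simp_all add: field_simps)
  moreover have "of_int a / real p ^ n \<in> Hp p" unfolding Hp_iff by blast
  ultimately show ?thesis by blast
qed

definition Cp_point :: "nat \<Rightarrow> real \<Rightarrow> real set" where
  "Cp_point p x = (\<lambda>t. x * t) ` Hp p"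

lemma Cp_iff_point: "H \<in> Cp p \<longleftrightarrow> (\<exists>x>0. H = Cp_point p x)"
  unfolding Cp_def Cp_point_def by auto

lemma mem_Cp_point_self: "x \<in> Cp_point p x"
  unfolding Cp_point_def using Hp_1 by force

lemma Cp_point_powr_mult:
  assumes "p > 0"
  shows "Cp_point p (real p powr of_int k * x) = Cp_point p x"
proof -
  have scale: "real p powr of_int k * h \<in> Hp p" if "h \<in> Hp p" for h k
    using Hp_mult[OF Hp_powr[OF assms] that] .
  have "(\<lambda>t. real p powr of_int k * t) ` Hp p = Hp p"
  proof (intro equalityI subsetI)
    fix h assume h: "h \<in> Hp p"
    have "h = real p powr of_int k * (real p powr of_int (- k) * h)"
      using assms by (simp add: powr_minus field_simps)
    then show "h \<in> (\<lambda>t. real p powr of_int k * t) ` Hp p"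
      using scale[OF h] by blast
  qed (use scale in auto)
  then have "(\<lambda>t. x * t) ` ((\<lambda>t. real p powr of_int k * t) ` Hp p) = (\<lambda>t. x * t) ` Hp p"
    by simp
  then show ?thesis
    unfolding Cp_point_def image_image by (simp add: mult_ac)
qed

lemma Cp_point_eq_imp_powr:
  assumes "prime p" "x > 0" "y > 0" "Cp_point p x = Cp_point p y"
  shows "\<exists>k::int. y = real p powr of_int k * x"
proof -
  have p0: "p > 0" using assms(1) prime_gt_0_nat by blast
  obtain h where h: "h \<in> Hp p" "y = x * h"
    using mem_Cp_point_self[of y p] assms(4) unfolding Cp_point_def by blast
  obtain h' where h': "h' \<in> Hp p" "x = y * h'"
    using mem_Cp_point_self[of x p] assms(4) unfolding Cp_point_def by blast
  obtain a n where a: "h = of_int a / real p ^ n" using h(1) Hp_iff by blast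
  obtain b m where b: "h' = of_int b / real p ^ m" using h'(1) Hp_iff by blast
  have "x * (h * h') = x * 1" using h(2) h'(2) by (simp add: mult_ac)
  then have "h * h' = 1" using assms(2) by simp
  then have "real_of_int (a * b) = real_of_int (int p ^ (n + m))"
    using p0 unfolding a b by (simp add: field_simps power_add)
  then have ab: "a * b = int p ^ (n + m)" by (simp only: of_int_eq_iff)
  have "h > 0" using h(2) assms(2,3) by (simp add: zero_less_mult_iff)
  then have apos: "a > 0" using a p0 by (simp add: zero_less_divide_iff)
  have "nat a * nat b = p ^ (n + m)"
    using ab apos by (simp add: nat_mult_distrib[symmetric] nat_power_eq)
  then have "nat a dvd p ^ (n + m)" by (metis dvd_triv_left)
  then obtain i where "nat a = p ^ i"
    using assms(1) by (auto simp: divides_primepow_nat)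
  then have "real_of_int a = real p ^ i"
    using apos by (metis of_int_of_nat_eq of_nat_power int_nat_eq less_imp_le)
  then have "h = real p powr of_int (int i - int n)"
    unfolding a using p0 by (simp add: powr_diff powr_realpow)
  then show ?thesis using h(2) by (metis mult.commute)
qed

lemma Cp_point_eq_iff:
  assumes "prime p" "x > 0" "y > 0"
  shows "Cp_point p x = Cp_point p y \<longleftrightarrow> (\<exists>k::int. y = real p powr of_int k * x)"
  using Cp_point_eq_imp_powr[OF assms] Cp_point_powr_mult[OF prime_gt_0_nat[OF assms(1)]] by auto

lemma
  assumes "H \<in> Cp p"
  shows rep_pos: "rep p H > 0" and Cp_point_rep: "Cp_point p (rep p H) = H"
proof -
  have "\<exists>l. l > 0 \<and> H = (\<lambda>x. l * x) ` Hp p" using assms unfolding Cp_def by auto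
  then have "rep p H > 0 \<and> H = (\<lambda>x. rep p H * x) ` Hp p"
    unfolding rep_def by (rule someI_ex)
  then show "rep p H > 0" "Cp_point p (rep p H) = H" unfolding Cp_point_def by auto
qed

lemma Cp_point_fundamental:
  assumes "p > 1" "l > 0"
  obtains x where "1 < x" "x \<le> real p" "Cp_point p x = Cp_point p l"
proof -
  define k where "k = \<lfloor>1 - log (real p) l\<rfloor>"
  have p1: "real p > 1" using assms by simp
  have e: "real p powr of_int k * l = real p powr (of_int k + log (real p) l)"
    using assms p1 by (simp add: powr_add)
  have "0 < of_int k + log (real p) l" "of_int k + log (real p) l \<le> 1"
    unfolding k_def by linarith+
  then have "1 < real p powr of_int k * l" "real p powr of_int k * l \<le> real p"
    unfolding e using p1 by (auto intro: order.trans[OF powr_mono[of _ 1]])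
  moreover have "Cp_point p (real p powr of_int k * l) = Cp_point p l"
    using Cp_point_powr_mult assms(1) by simp
  ultimately show ?thesis using that by blast
qed

lemma inj_on_Cp_point:
  assumes "prime p"
  shows "inj_on (Cp_point p) {1<..real p}"
proof (rule inj_onI)
  fix x y assume xy: "x \<in> {1<..real p}" "y \<in> {1<..real p}" "Cp_point p x = Cp_point p y"
  have p1: "real p > 1" using assms prime_gt_1_nat by simp
  obtain k :: int where k: "y = real p powr of_int k * x"
    using Cp_point_eq_imp_powr[OF assms _ _ xy(3)] xy by auto
  have pk: "real p powr of_int k = y / x" using k xy by auto
  have "1 / real p < y / x" "y / x < real p"
    using xy p1 by (auto simp: field_simps intro: less_le_trans[of _ "real p"] le_less_trans[of _ "real p"])
  then have "real p powr (-1) < real p powr of_int k" "real p powr of_int k < real p powr 1"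
    using p1 unfolding pk by (auto simp: powr_minus_divide)
  then have "-1 < real_of_int k" "real_of_int k < 1"
    using powr_less_cancel_iff[OF p1] by blast+
  then have "k = 0" by linarith
  then show "x = y" using k p1 by simp
qed

section \<open>Ramp expansions\<close>

definition diff_quot :: "(real \<Rightarrow> real) \<Rightarrow> real \<Rightarrow> real \<Rightarrow> real" where
  "diff_quot f x e = (f ((1 + e) * x) - f x) / e"

lemma Ord_at_eq:
  assumes "eventually (\<lambda>e. diff_quot f x e = R) (at_right 0)"
    and "eventually (\<lambda>e. diff_quot f x e = L) (at_left 0)"
  shows "Ord_at f x = R - L"
proof -
  have "Lim (at_right 0) (diff_quot f x) = R"
    by (rule tendsto_Lim) (use assms(1) in \<open>auto intro: tendsto_eventually\<close>)
  moreover have "Lim (at_left 0) (diff_quot f x) = L"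
    by (rule tendsto_Lim) (use assms(2) in \<open>auto intro: tendsto_eventually\<close>)
  ultimately show ?thesis unfolding Ord_at_def diff_quot_def by simp
qed

definition ramp :: "real \<Rightarrow> real \<Rightarrow> real" where
  "ramp v t = max 0 (t - v)"

lemma continuous_ramp [continuous_intros]: "isCont (ramp v) t"
  unfolding ramp_def by (intro continuous_intros)

lemma ramp_mult:
  assumes "c > 0"
  shows "ramp v (c * t) = c * ramp (v / c) t"
proof -
  have "c * t - v = c * (t - v / c)" using assms by (simp add: field_simps)
  then show ?thesis using assms unfolding ramp_def by (simp add: max_mult_distrib_left)
qed

lemma ramp_diff_quot_right:
  assumes "x > 0"
  shows "eventually (\<lambda>e. diff_quot (ramp v) x e = (if v \<le> x then x else 0)) (at_right 0)"
proof (cases "v \<le> x")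
  case True
  have "diff_quot (ramp v) x e = x" if "e > 0" for e
  proof -
    have "v \<le> (1 + e) * x" using True mult_pos_pos[OF that assms] by (simp add: algebra_simps)
    then show ?thesis using True that unfolding diff_quot_def ramp_def by (simp add: algebra_simps)
  qed
  then show ?thesis using True eventually_at_right_less[of 0] by (auto elim!: eventually_mono)
next
  case False
  have "diff_quot (ramp v) x e = 0" if "e > 0" "e < (v - x) / x" for e
  proof -
    have "(1 + e) * x < v" using that assms by (simp add: field_simps)
    then show ?thesis using False unfolding diff_quot_def ramp_def by simp
  qed
  moreover have "(v - x) / x > 0" using False assms by simp
  ultimately show ?thesis using False unfolding eventually_at_right_field by auto
qed

lemma ramp_diff_quot_left:
  assumes "x > 0"
  shows "eventually (\<lambda>e. diff_quot (ramp v) x e = (if v < x then x else 0)) (at_left 0)"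
proof (cases "v < x")
  case True
  have "diff_quot (ramp v) x e = x" if "(v - x) / x < e" "e < 0" for e
  proof -
    have "v < (1 + e) * x" using that assms by (simp add: field_simps)
    moreover have "(1 + e) * x \<le> x" using that assms by (simp add: mult_le_cancel_right1)
    ultimately show ?thesis using True that unfolding diff_quot_def ramp_def by (simp add: algebra_simps)
  qed
  moreover have "(v - x) / x < 0" using True assms by (simp add: divide_neg_pos)
  ultimately show ?thesis using True unfolding eventually_at_left_field by auto
next
  case False
  have "diff_quot (ramp v) x e = 0" if "e < 0" for e
  proof -
    have "(1 + e) * x \<le> x" using that assms by (simp add: mult_le_cancel_right1)
    then show ?thesis using False unfolding diff_quot_def ramp_def by simp
  qed
  then have "eventually (\<lambda>e. diff_quot (ramp v) x e = 0) (at_left 0)"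
    by (intro eventually_mono[OF eventually_at_left_real[where a = 0 and b = "-1"]]) auto
  with False show ?thesis by simp
qed

definition ramp_expansion ::
    "real \<Rightarrow> real \<Rightarrow> (real \<Rightarrow> real) \<Rightarrow> real \<Rightarrow> real \<Rightarrow> 'i set \<Rightarrow> ('i \<Rightarrow> real) \<Rightarrow> ('i \<Rightarrow> real) \<Rightarrow> bool"
  where "ramp_expansion a b f \<alpha> \<beta> J c v \<longleftrightarrow>
    finite J \<and> (\<forall>t\<in>{a..b}. f t = \<alpha> + \<beta> * t + (\<Sum>j\<in>J. c j * ramp (v j) t))"

lemma eventually_scaled_in_interval:
  assumes "a < x" "x < b"
  shows "eventually (\<lambda>e. (1 + e) * x \<in> {a..b}) (at (0::real))"
proof -
  have "((\<lambda>e. (1 + e) * x) \<longlongrightarrow> x) (at 0)"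
    by (rule tendsto_eq_intros refl)+ simp
  then have "eventually (\<lambda>e. (1 + e) * x \<in> {a<..<b}) (at 0)"
    using assms by (intro topological_tendstoD) auto
  then show ?thesis by (rule eventually_mono) auto
qed

lemma ramp_expansion_diff_quot:
  assumes "ramp_expansion a b f \<alpha> \<beta> J c v" "x \<in> {a..b}" "(1 + e) * x \<in> {a..b}" "e \<noteq> 0"
  shows "diff_quot f x e = \<beta> * x + (\<Sum>j\<in>J. c j * diff_quot (ramp (v j)) x e)"
proof -
  have "f ((1 + e) * x) - f x = \<beta> * (e * x) + (\<Sum>j\<in>J. c j * (ramp (v j) ((1 + e) * x) - ramp (v j) x))"
    using assms(1-3) unfolding ramp_expansion_def
    by (simp add: algebra_simps sum_subtractf)
  then show ?thesis using assms(4)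
    unfolding diff_quot_def by (simp add: add_divide_distrib sum_divide_distrib)
qed

lemma ramp_expansion_diff_quot_right:
  assumes "ramp_expansion a b f \<alpha> \<beta> J c v" "a < x" "x < b" "x > 0"
  shows "eventually (\<lambda>e. diff_quot f x e = x * (\<beta> + (\<Sum>j\<in>J. if v j \<le> x then c j else 0)))
           (at_right 0)"
proof -
  have "finite J" using assms(1) unfolding ramp_expansion_def by simp
  then have "eventually (\<lambda>e. \<forall>j\<in>J. diff_quot (ramp (v j)) x e = (if v j \<le> x then x else 0))
      (at_right 0)"
    using ramp_diff_quot_right[OF assms(4)] by (intro eventually_ball_finite) auto
  moreover have "eventually (\<lambda>e. (1 + e) * x \<in> {a..b}) (at_right 0)"
    using eventually_scaled_in_interval[OF assms(2,3)] by (simp add: eventually_at_split)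
  ultimately show ?thesis using eventually_at_right_less[of 0]
  proof eventually_elim
    case (elim e)
    then have "diff_quot f x e = \<beta> * x + (\<Sum>j\<in>J. c j * (if v j \<le> x then x else 0))"
      using ramp_expansion_diff_quot[OF assms(1)] assms(2,3) by simp
    then show ?case by (simp add: algebra_simps sum_distrib_left if_distrib cong: if_cong)
  qed
qed

lemma ramp_expansion_diff_quot_left:
  assumes "ramp_expansion a b f \<alpha> \<beta> J c v" "a < x" "x < b" "x > 0"
  shows "eventually (\<lambda>e. diff_quot f x e = x * (\<beta> + (\<Sum>j\<in>J. if v j < x then c j else 0)))
           (at_left 0)"
proof -
  have "finite J" using assms(1) unfolding ramp_expansion_def by simp
  then have "eventually (\<lambda>e. \<forall>j\<in>J. diff_quot (ramp (v j)) x e = (if v j < x then x else 0))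
      (at_left 0)"
    using ramp_diff_quot_left[OF assms(4)] by (intro eventually_ball_finite) auto
  moreover have "eventually (\<lambda>e. (1 + e) * x \<in> {a..b}) (at_left 0)"
    using eventually_scaled_in_interval[OF assms(2,3)] by (simp add: eventually_at_split)
  moreover have "eventually (\<lambda>e::real. e \<in> {-1<..<0}) (at_left 0)"
    by (rule eventually_at_left_real) simp
  ultimately show ?thesis
  proof eventually_elim
    case (elim e)
    then have "diff_quot f x e = \<beta> * x + (\<Sum>j\<in>J. c j * (if v j < x then x else 0))"
      using ramp_expansion_diff_quot[OF assms(1)] assms(2,3) by simp
    then show ?case by (simp add: algebra_simps sum_distrib_left if_distrib cong: if_cong)
  qed
qed

lemma Ord_at_ramp_expansion:
  assumes "ramp_expansion a b f \<alpha> \<beta> J c v" "a < x" "x < b" "x > 0"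
  shows "Ord_at f x = x * (\<Sum>j\<in>J. if v j = x then c j else 0)"
proof -
  have "Ord_at f x = x * (\<beta> + (\<Sum>j\<in>J. if v j \<le> x then c j else 0))
                   - x * (\<beta> + (\<Sum>j\<in>J. if v j < x then c j else 0))"
    using ramp_expansion_diff_quot_right[OF assms] ramp_expansion_diff_quot_left[OF assms]
    by (rule Ord_at_eq)
  also have "\<dots> = x * (\<Sum>j\<in>J. (if v j \<le> x then c j else 0) - (if v j < x then c j else 0))"
    by (simp add: algebra_simps sum_subtractf)
  also have "\<dots> = x * (\<Sum>j\<in>J. if v j = x then c j else 0)"
    by (intro arg_cong2[where f = "(*)"] sum.cong) auto
  finally show ?thesis .
qed

lemma ramp_expansion_isCont:
  assumes "ramp_expansion a b f \<alpha> \<beta> J c v" "a < t" "t < b"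
  shows "isCont f t"
proof -
  let ?g = "\<lambda>t. \<alpha> + \<beta> * t + (\<Sum>j\<in>J. c j * ramp (v j) t)"
  have "eventually (\<lambda>s. s \<in> {a<..<b}) (nhds t)"
    using assms by (intro eventually_nhds_in_open) auto
  then have "eventually (\<lambda>s. f s = ?g s) (nhds t)"
    by (rule eventually_mono) (use assms(1) in \<open>auto simp: ramp_expansion_def\<close>)
  moreover have "isCont ?g t" by (intro continuous_intros)
  ultimately show ?thesis by (simp add: isCont_cong)
qed

lemma ramp_expansion_add:
  assumes "ramp_expansion a b f \<alpha>\<^sub>1 \<beta>\<^sub>1 J\<^sub>1 c\<^sub>1 v" "ramp_expansion a b g \<alpha>\<^sub>2 \<beta>\<^sub>2 J\<^sub>2 c\<^sub>2 v"
  shows "ramp_expansion a b (\<lambda>t. f t + g t) (\<alpha>\<^sub>1 + \<alpha>\<^sub>2) (\<beta>\<^sub>1 + \<beta>\<^sub>2) (J\<^sub>1 \<union> J\<^sub>2)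
           (\<lambda>j. (if j \<in> J\<^sub>1 then c\<^sub>1 j else 0) + (if j \<in> J\<^sub>2 then c\<^sub>2 j else 0)) v"
proof -
  have fin: "finite J\<^sub>1" "finite J\<^sub>2" using assms unfolding ramp_expansion_def by auto
  have "(\<Sum>j\<in>J\<^sub>1 \<union> J\<^sub>2. (if j \<in> J\<^sub>1 then c\<^sub>1 j else 0) * ramp (v j) t) = (\<Sum>j\<in>J\<^sub>1. c\<^sub>1 j * ramp (v j) t)"
    "(\<Sum>j\<in>J\<^sub>1 \<union> J\<^sub>2. (if j \<in> J\<^sub>2 then c\<^sub>2 j else 0) * ramp (v j) t) = (\<Sum>j\<in>J\<^sub>2. c\<^sub>2 j * ramp (v j) t)"
    for t using fin by (auto intro!: sum.mono_neutral_cong_right)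
  then show ?thesis using assms fin unfolding ramp_expansion_def
    by (simp add: distrib_right sum.distrib algebra_simps)
qed

definition Hp_affine_on_gaps :: "nat \<Rightarrow> real set \<Rightarrow> (real \<Rightarrow> real) \<Rightarrow> bool" where
  "Hp_affine_on_gaps p S f \<longleftrightarrow> (\<forall>x\<in>S. \<forall>y\<in>S. x < y \<and> {x<..<y} \<inter> S = {} \<longrightarrow>
     (\<exists>s c. s \<in> Hp p \<and> (\<forall>t\<in>{x..y}. f t = s * t + c)))"

lemma pw_affine_Hp_iff:
  "pw_affine_Hp p f \<longleftrightarrow> continuous_on {0<..} f \<and>
     (\<forall>a b. 0 < a \<and> a < b \<longrightarrow>
        (\<exists>S. finite S \<and> a \<in> S \<and> b \<in> S \<and> S \<subseteq> {a..b} \<and> Hp_affine_on_gaps p S f))"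
  unfolding pw_affine_Hp_def Hp_affine_on_gaps_def ..

lemma ramp_expansion_affine_on_gap:
  assumes "ramp_expansion a b f \<alpha> \<beta> J c v" "a \<le> x" "y \<le> b" "\<forall>j\<in>J. v j \<notin> {x<..<y}"
    and "t \<in> {x..y}"
  shows "f t = (\<beta> + (\<Sum>j\<in>J. if v j \<le> x then c j else 0)) * t
               + (\<alpha> - (\<Sum>j\<in>J. if v j \<le> x then c j * v j else 0))"
proof -
  have "c j * ramp (v j) t = (if v j \<le> x then c j else 0) * t - (if v j \<le> x then c j * v j else 0)"
    if "j \<in> J" for j
  proof (cases "v j \<le> x")
    case False
    then have "y \<le> v j" using assms(4) that by auto
    then show ?thesis using False assms(5) unfolding ramp_def by auto
  next
    case True
    then have ramp_j: "ramp (v j) t = t - v j" using assms(5) unfolding ramp_def by auto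
    show ?thesis unfolding ramp_j using True by (simp add: right_diff_distrib mult.commute)
  qed
  then have "f t = \<alpha> + \<beta> * t + (\<Sum>j\<in>J. (if v j \<le> x then c j else 0) * t
                                      - (if v j \<le> x then c j * v j else 0))"
    using assms(1-3,5) unfolding ramp_expansion_def by simp
  then show ?thesis by (simp add: sum_subtractf sum_distrib_right distrib_right)
qed

lemma ramp_expansion_Hp_affine_on_gaps:
  assumes "ramp_expansion a b f \<alpha> \<beta> J c v" "p > 0" "\<beta> \<in> Hp p" "\<And>j. j \<in> J \<Longrightarrow> c j \<in> Hp p"
    and "a \<le> b"
  shows "\<exists>S. finite S \<and> a \<in> S \<and> b \<in> S \<and> S \<subseteq> {a..b} \<and> Hp_affine_on_gaps p S f"
proof -
  define S where "S = {a, b} \<union> (v ` J \<inter> {a..b})"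
  have "\<exists>s d. s \<in> Hp p \<and> (\<forall>t\<in>{x..y}. f t = s * t + d)"
    if xy: "x \<in> S" "y \<in> S" "x < y" "{x<..<y} \<inter> S = {}" for x y
  proof -
    have "a \<le> x" "y \<le> b" using xy assms(5) unfolding S_def by auto
    moreover have "\<forall>j\<in>J. v j \<notin> {x<..<y}" using xy(4) \<open>a \<le> x\<close> \<open>y \<le> b\<close> unfolding S_def by auto
    moreover have "\<beta> + (\<Sum>j\<in>J. if v j \<le> x then c j else 0) \<in> Hp p"
      using assms(2-4) by (intro Hp_add Hp_sum) auto
    ultimately show ?thesis using ramp_expansion_affine_on_gap[OF assms(1)] by blast
  qed
  then have "Hp_affine_on_gaps p S f" unfolding Hp_affine_on_gaps_def by auto
  moreover have "finite S" "a \<in> S" "b \<in> S" "S \<subseteq> {a..b}"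
    using assms(1,5) unfolding S_def ramp_expansion_def by auto
  ultimately show ?thesis by blast
qed

text \<open>Appending one more affine piece adds a ramp at the junction point \<open>b'\<close>, whose coefficient
  is the change of slope there.\<close>

lemma ramp_expansion_extend:
  assumes "ramp_expansion a b' f \<alpha> \<beta> J c id" "J \<subseteq> {a<..<b'}" "a < b'" "b' < b"
    and "\<forall>t\<in>{b'..b}. f t = s * t + d"
  shows "ramp_expansion a b f \<alpha> \<beta> (insert b' J) (c(b' := s - (\<beta> + (\<Sum>j\<in>J. c j)))) id"
proof -
  define \<kappa> where "\<kappa> = s - (\<beta> + (\<Sum>j\<in>J. c j))"
  have fin: "finite J" and eq: "\<forall>t\<in>{a..b'}. f t = \<alpha> + \<beta> * t + (\<Sum>j\<in>J. c j * ramp j t)"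
    using assms(1) unfolding ramp_expansion_def by auto
  have b'J: "b' \<notin> J" using assms(2) by auto
  have sum_insert: "(\<Sum>j\<in>insert b' J. (if j = b' then \<kappa> else c j) * ramp j t) = \<kappa> * ramp b' t + (\<Sum>j\<in>J. c j * ramp j t)"
    for t using fin b'J by (simp, intro sum.cong) auto
  have "f t = \<alpha> + \<beta> * t + (\<kappa> * ramp b' t + (\<Sum>j\<in>J. c j * ramp j t))" if t: "t \<in> {a..b}" for t
  proof (cases "t \<le> b'")
    case True
    then show ?thesis using eq t unfolding ramp_def by simp
  next
    case False
    have "(\<Sum>j\<in>J. c j * ramp j t) = (\<Sum>j\<in>J. c j * ramp j b' + (t - b') * c j)"
      using assms(2) False by (intro sum.cong) (auto simp: ramp_def algebra_simps)
    then have sum_J: "(\<Sum>j\<in>J. c j * ramp j t) = (\<Sum>j\<in>J. c j * ramp j b') + (t - b') * (\<Sum>j\<in>J. c j)"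
      by (simp add: sum.distrib sum_distrib_left)
    have ramp_b': "ramp b' t = t - b'" using False unfolding ramp_def by simp
    have "\<alpha> + \<beta> * t + (\<kappa> * ramp b' t + (\<Sum>j\<in>J. c j * ramp j t))
        = (\<alpha> + \<beta> * b' + (\<Sum>j\<in>J. c j * ramp j b')) + s * (t - b')"
      unfolding ramp_b' sum_J \<kappa>_def by (simp add: algebra_simps)
    also have "\<dots> = f t"
    proof -
      have "f b' = \<alpha> + \<beta> * b' + (\<Sum>j\<in>J. c j * ramp j b')" using eq assms(3) by simp
      moreover have "f b' = s * b' + d" "f t = s * t + d" using assms(4,5) t False by auto
      ultimately show ?thesis by (simp add: algebra_simps)
    qed
    finally show ?thesis by simp
  qed
  then show ?thesis
    unfolding ramp_expansion_def \<kappa>_def[symmetric] using fin by (simp add: sum_insert)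
qed

lemma Hp_affine_on_gaps_Diff_max:
  assumes "Hp_affine_on_gaps p S f" "S \<subseteq> {..b}"
  shows "Hp_affine_on_gaps p (S - {b}) f"
  unfolding Hp_affine_on_gaps_def
proof (intro ballI impI)
  fix x y assume xy: "x \<in> S - {b}" "y \<in> S - {b}" "x < y \<and> {x<..<y} \<inter> (S - {b}) = {}"
  have "y \<le> b" using xy(2) assms(2) by auto
  then have "{x<..<y} \<inter> S = {x<..<y} \<inter> (S - {b})" by auto
  then have "{x<..<y} \<inter> S = {}" using xy(3) by simp
  then show "\<exists>s c. s \<in> Hp p \<and> (\<forall>t\<in>{x..y}. f t = s * t + c)"
    using assms(1) xy unfolding Hp_affine_on_gaps_def by auto
qed

lemma Hp_affine_on_gaps_ramp_expansion:
  assumes "finite S" "a \<in> S" "b \<in> S" "S \<subseteq> {a..b}" "a < b" "Hp_affine_on_gaps p S f" "p > 0"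
  shows "\<exists>\<alpha> \<beta> c J. J \<subseteq> {a<..<b} \<and> \<beta> \<in> Hp p \<and> (\<forall>j\<in>J. c j \<in> Hp p) \<and>
           ramp_expansion a b f \<alpha> \<beta> J c id"
  using assms
proof (induction "card S" arbitrary: S b rule: less_induct)
  case less
  define S' where "S' = S - {b}"
  define b' where "b' = Max S'"
  have S': "finite S'" "a \<in> S'" using less.prems unfolding S'_def by auto
  have below_b': "x \<le> b'" if "x \<in> S'" for x unfolding b'_def using S'(1) that by (rule Max_ge)
  have b': "b' \<in> S'" unfolding b'_def using S' by (intro Max_in) auto
  then have "a \<le> b'" "b' < b" using less.prems(4) unfolding S'_def by auto
  have "{b'<..<b} \<inter> S = {}"
  proof (intro equals0I)
    fix x assume "x \<in> {b'<..<b} \<inter> S"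
    then show False using below_b'[of x] unfolding S'_def by auto
  qed
  moreover have "b' \<in> S" using b' unfolding S'_def by simp
  ultimately obtain s d where sd: "s \<in> Hp p" "\<forall>t\<in>{b'..b}. f t = s * t + d"
    using less.prems(3,6) \<open>b' < b\<close> unfolding Hp_affine_on_gaps_def by blast
  show ?case
  proof (cases "b' = a")
    case True
    have "ramp_expansion a b f d s ({}::real set) (\<lambda>_. 0) id"
      unfolding ramp_expansion_def using sd True by (auto simp: mult.commute)
    then show ?thesis using sd by blast
  next
    case False
    have "Hp_affine_on_gaps p S' f"
      unfolding S'_def using less.prems(4,6) by (intro Hp_affine_on_gaps_Diff_max) auto
    moreover have "card S' < card S" unfolding S'_def using less.prems(1,3) by (rule card_Diff1_less)
    moreover have "S' \<subseteq> {a..b'}" using below_b' less.prems(4) unfolding S'_def by force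
    ultimately obtain \<alpha> \<beta> c J where IH: "J \<subseteq> {a<..<b'}" "\<beta> \<in> Hp p" "\<forall>j\<in>J. c j \<in> Hp p"
        "ramp_expansion a b' f \<alpha> \<beta> J c id"
      using less.hyps[of S' b'] S' b' \<open>a \<le> b'\<close> False less.prems(7) by auto
    define c' where "c' = c(b' := s - (\<beta> + (\<Sum>j\<in>J. c j)))"
    have "ramp_expansion a b f \<alpha> \<beta> (insert b' J) c' id"
      unfolding c'_def using ramp_expansion_extend[OF IH(4,1) _ \<open>b' < b\<close> sd(2)] \<open>a \<le> b'\<close> False by simp
    moreover have "\<forall>j\<in>insert b' J. c' j \<in> Hp p"
      unfolding c'_def using IH(2,3) sd(1) less.prems(7) by (auto intro!: Hp_diff Hp_add Hp_sum)
    moreover have "insert b' J \<subseteq> {a<..<b}" using IH(1) \<open>a \<le> b'\<close> False \<open>b' < b\<close> by auto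
    ultimately show ?thesis using IH(2) by blast
  qed
qed

lemma Kreal_ramp_expansion:
  assumes "f \<in> Kreal p" "p > 0" "0 < a" "a < b"
  obtains \<alpha> \<beta> c J where "J \<subseteq> {a<..<b}" "\<beta> \<in> Hp p" "\<forall>j\<in>J. c j \<in> Hp p"
    "ramp_expansion a b f \<alpha> \<beta> J c id"
proof -
  obtain S where "finite S" "a \<in> S" "b \<in> S" "S \<subseteq> {a..b}" "Hp_affine_on_gaps p S f"
    using assms unfolding Kreal_def pw_affine_Hp_iff by blast
  then show ?thesis using Hp_affine_on_gaps_ramp_expansion[of S a b p f] assms(2,4) that by blast
qed

lemma Kreal_diff_quot_eventually_const:
  assumes "f \<in> Kreal p" "p > 0" "x > 0"
  obtains R L where "eventually (\<lambda>e. diff_quot f x e = R) (at_right 0)"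
    "eventually (\<lambda>e. diff_quot f x e = L) (at_left 0)"
proof -
  have "0 < x / 2" "x / 2 < 2 * x" using assms(3) by auto
  then obtain \<alpha> \<beta> c J where "J \<subseteq> {x / 2<..<2 * x}" "\<beta> \<in> Hp p" "\<forall>j\<in>J. c j \<in> Hp p"
      "ramp_expansion (x / 2) (2 * x) f \<alpha> \<beta> J c id"
    by (rule Kreal_ramp_expansion[OF assms(1,2)])
  moreover have "x / 2 < x" "x < 2 * x" using assms(3) by auto
  ultimately show ?thesis
    using that[OF ramp_expansion_diff_quot_right ramp_expansion_diff_quot_left] assms(3) by blast
qed

lemma Ord_at_add:
  assumes "f \<in> Kreal p" "g \<in> Kreal p" "p > 0" "x > 0"
  shows "Ord_at (\<lambda>t. f t + g t) x = Ord_at f x + Ord_at g x"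
proof -
  obtain R\<^sub>1 L\<^sub>1 where f: "eventually (\<lambda>e. diff_quot f x e = R\<^sub>1) (at_right 0)"
      "eventually (\<lambda>e. diff_quot f x e = L\<^sub>1) (at_left 0)"
    using Kreal_diff_quot_eventually_const[OF assms(1,3,4)] .
  obtain R\<^sub>2 L\<^sub>2 where g: "eventually (\<lambda>e. diff_quot g x e = R\<^sub>2) (at_right 0)"
      "eventually (\<lambda>e. diff_quot g x e = L\<^sub>2) (at_left 0)"
    using Kreal_diff_quot_eventually_const[OF assms(2,3,4)] .
  have sum: "diff_quot (\<lambda>t. f t + g t) x e = diff_quot f x e + diff_quot g x e" for e
    unfolding diff_quot_def by (simp add: diff_divide_distrib add_divide_distrib)
  have "Ord_at (\<lambda>t. f t + g t) x = (R\<^sub>1 + R\<^sub>2) - (L\<^sub>1 + L\<^sub>2)"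
    by (rule Ord_at_eq) (use f g in \<open>auto simp: sum elim: eventually_elim2\<close>)
  also have "\<dots> = Ord_at f x + Ord_at g x"
    using Ord_at_eq[OF f] Ord_at_eq[OF g] by simp
  finally show ?thesis .
qed

lemma Ord_at_zero: "Ord_at (\<lambda>_. 0) x = 0"
  using Ord_at_eq[of "\<lambda>_. 0" x 0 0] by (simp add: diff_quot_def)

lemma Kreal_add:
  assumes "f \<in> Kreal p" "g \<in> Kreal p" "p > 0"
  shows "(\<lambda>t. f t + g t) \<in> Kreal p"
proof -
  have "\<exists>S. finite S \<and> a \<in> S \<and> b \<in> S \<and> S \<subseteq> {a..b} \<and> Hp_affine_on_gaps p S (\<lambda>t. f t + g t)"
    if ab: "0 < a" "a < b" for a b
  proof -
    obtain \<alpha>\<^sub>1 \<beta>\<^sub>1 c\<^sub>1 J\<^sub>1 where f: "J\<^sub>1 \<subseteq> {a<..<b}" "\<beta>\<^sub>1 \<in> Hp p" "\<forall>j\<in>J\<^sub>1. c\<^sub>1 j \<in> Hp p"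
        "ramp_expansion a b f \<alpha>\<^sub>1 \<beta>\<^sub>1 J\<^sub>1 c\<^sub>1 id"
      by (rule Kreal_ramp_expansion[OF assms(1,3) ab])
    obtain \<alpha>\<^sub>2 \<beta>\<^sub>2 c\<^sub>2 J\<^sub>2 where g: "J\<^sub>2 \<subseteq> {a<..<b}" "\<beta>\<^sub>2 \<in> Hp p" "\<forall>j\<in>J\<^sub>2. c\<^sub>2 j \<in> Hp p"
        "ramp_expansion a b g \<alpha>\<^sub>2 \<beta>\<^sub>2 J\<^sub>2 c\<^sub>2 id"
      by (rule Kreal_ramp_expansion[OF assms(2,3) ab])
    have "\<beta>\<^sub>1 + \<beta>\<^sub>2 \<in> Hp p" using f(2) g(2) assms(3) by (rule Hp_add[rotated])
    moreover have "(if j \<in> J\<^sub>1 then c\<^sub>1 j else 0) + (if j \<in> J\<^sub>2 then c\<^sub>2 j else 0) \<in> Hp p" for j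
      using f(3) g(3) assms(3) by (auto intro!: Hp_add)
    ultimately show ?thesis
      using ramp_expansion_Hp_affine_on_gaps[OF ramp_expansion_add[OF f(4) g(4)] assms(3)] ab
      by simp
  qed
  moreover have "continuous_on {0<..} (\<lambda>t. f t + g t)"
    using assms unfolding Kreal_def pw_affine_Hp_def by (auto intro: continuous_on_add)
  ultimately show ?thesis using assms unfolding Kreal_def pw_affine_Hp_iff by auto
qed

lemma Kreal_zero:
  assumes "p > 0"
  shows "(\<lambda>_. 0) \<in> Kreal p"
proof -
  have "ramp_expansion a b (\<lambda>_. 0) 0 0 {} (\<lambda>_. 0) id" for a b :: real
    unfolding ramp_expansion_def by simp
  then have "\<exists>S. finite S \<and> a \<in> S \<and> b \<in> S \<and> S \<subseteq> {a..b} \<and> Hp_affine_on_gaps p S (\<lambda>_. 0)"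
    if "a < b" for a b :: real
    by (rule ramp_expansion_Hp_affine_on_gaps[OF _ assms]) (use that in auto)
  then show ?thesis unfolding Kreal_def pw_affine_Hp_iff by auto
qed

lemma Kreal_sum:
  assumes "finite Q" "\<And>q. q \<in> Q \<Longrightarrow> F q \<in> Kreal p" "p > 0"
  shows "(\<lambda>t. \<Sum>q\<in>Q. F q t) \<in> Kreal p"
  using assms by (induction Q rule: finite_induct) (auto intro: Kreal_zero Kreal_add)

lemma Ord_at_sum:
  assumes "finite Q" "\<And>q. q \<in> Q \<Longrightarrow> F q \<in> Kreal p" "p > 0" "x > 0"
  shows "Ord_at (\<lambda>t. \<Sum>q\<in>Q. F q t) x = (\<Sum>q\<in>Q. Ord_at (F q) x)"
  using assms
proof (induction Q rule: finite_induct)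
  case (insert q Q)
  then show ?case using Ord_at_add[of "F q" p "\<lambda>t. \<Sum>q\<in>Q. F q t"] Kreal_sum[of Q F p] by simp
qed (simp add: Ord_at_zero)

lemma diff_quot_mult_periodic:
  assumes "c > 0" "x > 0" "\<forall>t>0. f (c * t) = f t"
  shows "eventually (\<lambda>e. diff_quot f (c * x) e = diff_quot f x e) (at 0)"
proof (rule eventually_mono[OF eventually_at_ball[of 1 0 UNIV]])
  fix e :: real assume "e \<in> ball 0 1 \<and> e \<in> UNIV"
  then have "(1 + e) * x > 0" using assms(2) by (auto simp: dist_real_def)
  then show "diff_quot f (c * x) e = diff_quot f x e"
    unfolding diff_quot_def using assms by (metis mult.left_commute)
qed simp

lemma Ord_at_mult_periodic:
  assumes "c > 0" "x > 0" "\<forall>t>0. f (c * t) = f t"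
  shows "Ord_at f (c * x) = Ord_at f x"
  using diff_quot_mult_periodic[OF assms]
  unfolding Ord_at_def diff_quot_def[symmetric]
  by (auto simp: eventually_at_split intro!: arg_cong2[where f = "(-)"] Lim_cong)

lemma Kreal_powr_periodic:
  assumes "f \<in> Kreal p" "p > 0" "t > 0"
  shows "f (real p powr of_int k * t) = f t"
proof -
  have pow: "f (real p ^ n * t) = f t" if "t > 0" for n t
  proof (induction n)
    case (Suc n)
    have "real p ^ n * t > 0" using assms(2) that by simp
    then have "f (real p * (real p ^ n * t)) = f (real p ^ n * t)"
      using assms(1) unfolding Kreal_def by blast
    then show ?case using Suc by (simp add: mult.assoc)
  qed simp
  show ?thesis
  proof (cases "k \<ge> 0")
    case False
    have "f (real p ^ nat (- k) * (t / real p ^ nat (- k))) = f (t / real p ^ nat (- k))"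
      using assms by (intro pow) simp
    then show ?thesis using False assms(2) by (simp add: powr_of_int_eq)
  qed (use pow assms in \<open>simp add: powr_of_int_eq\<close>)
qed

lemma pdiv_Cp_point:
  assumes "prime p" "f \<in> Kreal p" "x > 0"
  shows "pdiv p f (Cp_point p x) = Ord_at f x"
proof -
  have p0: "p > 0" using assms(1) prime_gt_0_nat by blast
  have H: "Cp_point p x \<in> Cp p" using assms(3) Cp_iff_point by blast
  obtain k :: int where k: "rep p (Cp_point p x) = real p powr of_int k * x"
    using Cp_point_eq_imp_powr[OF assms(1,3) rep_pos[OF H]] Cp_point_rep[OF H] by metis
  have "Ord_at f (real p powr of_int k * x) = Ord_at f x"
    using Kreal_powr_periodic[OF assms(2) p0] p0 assms(3) by (intro Ord_at_mult_periodic) auto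
  then show ?thesis unfolding pdiv_def using H k by simp
qed

lemma pdiv_sum:
  assumes "prime p" "finite Q" "\<And>q. q \<in> Q \<Longrightarrow> F q \<in> Kreal p"
  shows "pdiv p (\<lambda>t. \<Sum>q\<in>Q. F q t) H = (\<Sum>q\<in>Q. pdiv p (F q) H)"
  using Ord_at_sum[OF assms(2,3) prime_gt_0_nat[OF assms(1)]] rep_pos[of H p]
  unfolding pdiv_def by auto

section \<open>Principal divisors have degree zero\<close>

text \<open>Summing \<open>x\<cdot>(jump of slope at x)\<close> over \<open>(1, q]\<close> telescopes (an integration by parts) to
  \<open>q f'(q) - f'(1) - (f(q) - f(1))\<close>, which vanishes when \<open>f(qt) = f(t)\<close>.\<close>

lemma ramp_expansion_periodic_balance:
  assumes "ramp_expansion a b f \<alpha> \<beta> J c id" "a < 1" "1 < q" "q < b" "f q = f 1"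
    and "q * (\<beta> + (\<Sum>j\<in>J. if j \<le> q then c j else 0)) = \<beta> + (\<Sum>j\<in>J. if j \<le> 1 then c j else 0)"
  shows "(\<Sum>j\<in>J. if 1 < j \<and> j \<le> q then c j * j else 0) = 0"
proof -
  define A where "A = (\<Sum>j\<in>J. if j \<le> 1 then c j else 0)"
  define C where "C = (\<Sum>j\<in>J. if 1 < j \<and> j \<le> q then c j else 0)"
  define W where "W = (\<Sum>j\<in>J. if 1 < j \<and> j \<le> q then c j * j else 0)"
  have fin: "finite J" and eq: "\<forall>t\<in>{a..b}. f t = \<alpha> + \<beta> * t + (\<Sum>j\<in>J. c j * ramp j t)"
    using assms(1) unfolding ramp_expansion_def by auto
  have "(\<Sum>j\<in>J. if j \<le> q then c j else 0) = A + C"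
    unfolding A_def C_def sum.distrib[symmetric] using assms(3) by (intro sum.cong) auto
  then have slope: "q * (\<beta> + A + C) = \<beta> + A" using assms(6) unfolding A_def by (simp add: add.assoc)
  have "c j * (ramp j q - ramp j 1) =
      (q - 1) * (if j \<le> 1 then c j else 0) + q * (if 1 < j \<and> j \<le> q then c j else 0)
      - (if 1 < j \<and> j \<le> q then c j * j else 0)" for j
    using assms(3) unfolding ramp_def by (cases "j \<le> 1"; cases "j \<le> q") (auto simp: algebra_simps)
  then have "(\<Sum>j\<in>J. c j * (ramp j q - ramp j 1)) = (q - 1) * A + q * C - W"
    unfolding A_def C_def W_def by (simp add: sum.distrib sum_subtractf sum_distrib_left)
  moreover have "0 = \<beta> * (q - 1) + (\<Sum>j\<in>J. c j * (ramp j q - ramp j 1))"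
    using assms(2-5) eq by (simp add: algebra_simps sum_subtractf)
  ultimately have "W = \<beta> * (q - 1) + (q - 1) * A + q * C" by simp
  also have "\<dots> = 0" using slope by (simp add: algebra_simps)
  finally show ?thesis unfolding W_def .
qed

lemma Kreal_Ord_at_fundamental:
  assumes "f \<in> Kreal p" "p > 1"
  obtains T where "finite T" "T \<subseteq> {1<..real p}" "\<forall>x\<in>{1<..real p} - T. Ord_at f x = 0"
    "(\<Sum>x\<in>T. Ord_at f x) = 0"
proof -
  have p1: "p > 0" "real p > 1" using assms(2) by auto
  have "0 < (1 / 2 :: real)" "1 / 2 < 2 * real p" using p1 by auto
  then obtain \<alpha> \<beta> c J where "J \<subseteq> {1 / 2<..<2 * real p}" "\<beta> \<in> Hp p" "\<forall>j\<in>J. c j \<in> Hp p"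
      and exp: "ramp_expansion (1 / 2) (2 * real p) f \<alpha> \<beta> J c id"
    by (rule Kreal_ramp_expansion[OF assms(1) p1(1)])
  have fin: "finite J" using exp unfolding ramp_expansion_def by simp
  have Ord: "Ord_at f x = (if x \<in> J then c x * x else 0)" if "x \<in> {1<..real p}" for x
    using Ord_at_ramp_expansion[OF exp] that fin by (simp add: sum.delta mult.commute)
  have per: "\<forall>t>0. f (real p * t) = f t" using assms(1) unfolding Kreal_def by blast
  define R where "R x = x * (\<beta> + (\<Sum>j\<in>J. if j \<le> x then c j else 0))" for x
  have "eventually (\<lambda>e. diff_quot f (real p * 1) e = R (real p)) (at_right 0)"
    using ramp_expansion_diff_quot_right[OF exp, of "real p"] p1 unfolding R_def by simp
  moreover have "eventually (\<lambda>e. diff_quot f 1 e = R 1) (at_right 0)"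
    using ramp_expansion_diff_quot_right[OF exp, of 1] p1 unfolding R_def by simp
  moreover have "eventually (\<lambda>e. diff_quot f (real p * 1) e = diff_quot f 1 e) (at_right 0)"
    using diff_quot_mult_periodic[OF _ _ per, of 1] p1 by (simp add: eventually_at_split)
  ultimately have "eventually (\<lambda>e. R (real p) = R 1) (at_right (0::real))"
    by eventually_elim simp
  then have "R (real p) = R 1" by simp
  moreover have "f (real p) = f 1" using per[rule_format, of 1] by simp
  ultimately have "(\<Sum>j\<in>J. if 1 < j \<and> j \<le> real p then c j * j else 0) = 0"
    using ramp_expansion_periodic_balance[OF exp] p1 unfolding R_def by simp
  moreover have "(\<Sum>x\<in>J \<inter> {1<..real p}. Ord_at f x)
      = (\<Sum>j\<in>J. if 1 < j \<and> j \<le> real p then c j * j else 0)"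
    using fin Ord by (simp add: sum.inter_restrict)
  ultimately have "(\<Sum>x\<in>J \<inter> {1<..real p}. Ord_at f x) = 0" by simp
  moreover have "\<forall>x\<in>{1<..real p} - J \<inter> {1<..real p}. Ord_at f x = 0" using Ord by auto
  ultimately show ?thesis using that fin by blast
qed

lemma deg_eq_sum:
  assumes "finite S" "{H. D H \<noteq> 0} \<subseteq> S"
  shows "deg D = (\<Sum>H\<in>S. D H)"
  unfolding deg_def using assms by (intro sum.mono_neutral_left) auto

lemma deg_add:
  assumes "finite {H. D H \<noteq> 0}" "finite {H. E H \<noteq> 0}"
  shows "deg (\<lambda>H. D H + E H) = deg D + deg E"
proof -
  let ?S = "{H. D H \<noteq> 0} \<union> {H. E H \<noteq> 0}"
  have "deg (\<lambda>H. D H + E H) = (\<Sum>H\<in>?S. D H + E H)" "deg D = (\<Sum>H\<in>?S. D H)" "deg E = (\<Sum>H\<in>?S. E H)"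
    using assms by (auto intro!: deg_eq_sum)
  then show ?thesis by (simp add: sum.distrib)
qed

lemma deg_nonneg: "(\<And>H. D H \<ge> 0) \<Longrightarrow> deg D \<ge> 0"
  unfolding deg_def by (intro sum_nonneg) auto

lemma
  assumes "prime p" "f \<in> Kreal p"
  shows finite_support_pdiv: "finite {H. pdiv p f H \<noteq> 0}"
    and deg_pdiv: "deg (pdiv p f) = 0"
proof -
  have p1: "p > 1" using assms(1) prime_gt_1_nat by blast
  obtain T where T: "finite T" "T \<subseteq> {1<..real p}" "\<forall>x\<in>{1<..real p} - T. Ord_at f x = 0"
      "(\<Sum>x\<in>T. Ord_at f x) = 0"
    using Kreal_Ord_at_fundamental[OF assms(2) p1] by blast
  have supp: "{H. pdiv p f H \<noteq> 0} \<subseteq> Cp_point p ` T"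
  proof
    fix H assume H: "H \<in> {H. pdiv p f H \<noteq> 0}"
    then have "H \<in> Cp p" unfolding pdiv_def by (auto split: if_splits)
    then obtain x where x: "1 < x" "x \<le> real p" "H = Cp_point p x"
      using Cp_point_fundamental[OF p1] Cp_iff_point by metis
    then have "Ord_at f x \<noteq> 0" using H pdiv_Cp_point[OF assms] by simp
    then show "H \<in> Cp_point p ` T" using T(3) x by auto
  qed
  then show "finite {H. pdiv p f H \<noteq> 0}" using T(1) finite_subset by blast
  have "deg (pdiv p f) = (\<Sum>H\<in>Cp_point p ` T. pdiv p f H)"
    using T(1) supp by (intro deg_eq_sum) auto
  also have "\<dots> = (\<Sum>x\<in>T. pdiv p f (Cp_point p x))"
    using inj_on_subset[OF inj_on_Cp_point[OF assms(1)] T(2)] by (simp add: sum.reindex)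
  also have "\<dots> = (\<Sum>x\<in>T. Ord_at f x)"
    using T(2) pdiv_Cp_point[OF assms] by (intro sum.cong) auto
  finally show "deg (pdiv p f) = 0" using T(4) by simp
qed

lemma deg_nonneg_if_H0_nontrivial:
  assumes "prime p" "is_divisor p D" "f \<in> Kreal p" "\<forall>H\<in>Cp p. D H + pdiv p f H \<ge> 0"
  shows "deg D \<ge> 0"
proof -
  have "D H + pdiv p f H \<ge> 0" for H
    using assms(2,4) unfolding is_divisor_def pdiv_def by (cases "H \<in> Cp p") auto
  then have "deg (\<lambda>H. D H + pdiv p f H) \<ge> 0" by (rule deg_nonneg)
  moreover have "finite {H. D H \<noteq> 0}" using assms(2) unfolding is_divisor_def by blast
  ultimately show ?thesis
    using deg_add finite_support_pdiv[OF assms(1,3)] deg_pdiv[OF assms(1,3)] by simp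
qed

lemma H0_trivial_if_deg_neg:
  assumes "prime p" "is_divisor p D" "deg D < 0"
  shows "H0 p D = {\<lambda>_. -\<infinity>}"
  using deg_nonneg_if_H0_nontrivial[OF assms(1,2)] assms(3) unfolding H0_def by force

section \<open>Periodized tents\<close>

lemma finite_powr_int_between:
  assumes "real p > 1" "\<alpha> > 0"
  shows "finite {k::int. \<alpha> \<le> real p powr of_int k \<and> real p powr of_int k \<le> \<gamma>}"
proof (rule finite_subset)
  show "{k::int. \<alpha> \<le> real p powr of_int k \<and> real p powr of_int k \<le> \<gamma>} \<subseteq>
        {\<lceil>log (real p) \<alpha>\<rceil> .. \<lfloor>log (real p) (max \<gamma> 1)\<rfloor>}"
  proof
    fix k assume k: "k \<in> {k::int. \<alpha> \<le> real p powr of_int k \<and> real p powr of_int k \<le> \<gamma>}"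
    then have "log (real p) \<alpha> \<le> log (real p) (real p powr of_int k)"
      "log (real p) (real p powr of_int k) \<le> log (real p) (max \<gamma> 1)"
      using assms by (subst log_le_cancel_iff; auto)+
    then show "k \<in> {\<lceil>log (real p) \<alpha>\<rceil> .. \<lfloor>log (real p) (max \<gamma> 1)\<rfloor>}"
      using assms by (simp add: ceiling_le_iff le_floor_iff)
  qed
qed simp

lemma sum_if_unique:
  assumes "finite F" "\<And>k k'. P k \<Longrightarrow> P k' \<Longrightarrow> k = k'" "\<And>k. P k \<Longrightarrow> k \<in> F"
  shows "(\<Sum>k\<in>F. if P k then A else 0) = (if \<exists>k. P k then A else 0)"
proof (cases "\<exists>k. P k")
  case True
  then obtain k\<^sub>0 where "P k\<^sub>0" by blast
  then have "(\<Sum>k\<in>F. if P k then A else 0) = (\<Sum>k\<in>F. if k = k\<^sub>0 then A else 0)"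
    using assms(2) by (intro sum.cong) auto
  then show ?thesis using assms(1,3) \<open>P k\<^sub>0\<close> by auto
qed simp

definition ramp_comb :: "real set \<Rightarrow> (real \<Rightarrow> real) \<Rightarrow> real \<Rightarrow> real" where
  "ramp_comb V c w = (\<Sum>v\<in>V. c v * ramp v w)"

text \<open>The sum over all \<open>k \<in> \<int>\<close> of \<open>g (p\<^sup>k t)\<close>, for \<open>g\<close> vanishing outside \<open>[y, z]\<close>; only the finitely
  many \<open>k\<close> with \<open>p\<^sup>k t \<in> [y, z]\<close> contribute.\<close>

definition periodize :: "nat \<Rightarrow> real \<Rightarrow> real \<Rightarrow> (real \<Rightarrow> real) \<Rightarrow> real \<Rightarrow> real" where
  "periodize p y z g t =
     (\<Sum>k\<in>{k::int. y \<le> real p powr of_int k * t \<and> real p powr of_int k * t \<le> z}.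
        g (real p powr of_int k * t))"

context
  fixes p :: nat and y z :: real and V :: "real set" and c :: "real \<Rightarrow> real"
  assumes p1: "real p > 1" and y0: "y > 0" and V: "finite V" "V \<subseteq> {y..z}"
    and balanced: "(\<Sum>v\<in>V. c v) = 0" "(\<Sum>v\<in>V. c v * v) = 0"
begin

lemma ramp_comb_outside:
  assumes "w \<notin> {y..z}"
  shows "ramp_comb V c w = 0"
proof (cases "w < y")
  case True
  then show ?thesis using V unfolding ramp_comb_def ramp_def by (auto intro!: sum.neutral)
next
  case False
  then have "ramp_comb V c w = (\<Sum>v\<in>V. c v * (w - v))"
    using V assms unfolding ramp_comb_def ramp_def by (intro sum.cong) auto
  also have "\<dots> = w * (\<Sum>v\<in>V. c v) - (\<Sum>v\<in>V. c v * v)"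
    by (simp add: algebra_simps sum_subtractf sum_distrib_left)
  finally show ?thesis using balanced by simp
qed

lemma periodize_eq_sum:
  assumes "t > 0" "finite F" "{k::int. y \<le> real p powr of_int k * t \<and> real p powr of_int k * t \<le> z} \<subseteq> F"
  shows "periodize p y z (ramp_comb V c) t = (\<Sum>k\<in>F. ramp_comb V c (real p powr of_int k * t))"
  unfolding periodize_def using assms
  by (intro sum.mono_neutral_left) (auto intro!: ramp_comb_outside)

lemma periodize_periodic:
  assumes "t > 0"
  shows "periodize p y z (ramp_comb V c) (real p * t) = periodize p y z (ramp_comb V c) t"
proof -
  have shift: "real p powr of_int (k + 1) * t = real p powr of_int k * (real p * t)" for k
    using p1 by (simp add: powr_add mult_ac)
  have "{k. y \<le> real p powr of_int k * t \<and> real p powr of_int k * t \<le> z}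
      = (\<lambda>k. k + 1) ` {k. y \<le> real p powr of_int k * (real p * t) \<and> real p powr of_int k * (real p * t) \<le> z}"
    by (rule set_eqI, rule iffI, rule image_eqI[of _ _ "_ - 1"]) (auto simp flip: shift)
  then have "periodize p y z (ramp_comb V c) t = periodize p y z (ramp_comb V c) (real p * t)"
    unfolding periodize_def
  proof (rule sum.reindex_cong[rotated])
    show "ramp_comb V c (real p powr of_int (k + 1) * t) = ramp_comb V c (real p powr of_int k * (real p * t))"
      for k unfolding shift ..
  qed (rule inj_onI, simp)
  then show ?thesis by simp
qed

lemma periodize_ramp_expansion:
  assumes "0 < a" "a < b"
  defines "F \<equiv> {k::int. y / b \<le> real p powr of_int k \<and> real p powr of_int k \<le> z / a}"
  shows "ramp_expansion a b (periodize p y z (ramp_comb V c)) 0 0 (F \<times> V)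
          (\<lambda>(k, v). real p powr of_int k * c v) (\<lambda>(k, v). v / real p powr of_int k)"
proof -
  have finF: "finite F" unfolding F_def using finite_powr_int_between p1 y0 assms by simp
  have "periodize p y z (ramp_comb V c) t
      = (\<Sum>(k, v)\<in>F \<times> V. real p powr of_int k * c v * ramp (v / real p powr of_int k) t)"
    if t: "t \<in> {a..b}" for t
  proof -
    have "{k::int. y \<le> real p powr of_int k * t \<and> real p powr of_int k * t \<le> z} \<subseteq> F"
    proof
      fix k assume k: "k \<in> {k::int. y \<le> real p powr of_int k * t \<and> real p powr of_int k * t \<le> z}"
      have "real p powr of_int k * a \<le> real p powr of_int k * t"
        "real p powr of_int k * t \<le> real p powr of_int k * b"
        using t p1 by (auto intro: mult_left_mono)
      then show "k \<in> F" using k assms(1,2) unfolding F_def by (auto simp: field_simps)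
    qed
    then have "periodize p y z (ramp_comb V c) t = (\<Sum>k\<in>F. ramp_comb V c (real p powr of_int k * t))"
      using periodize_eq_sum finF t assms(1) by simp
    also have "\<dots> = (\<Sum>k\<in>F. \<Sum>v\<in>V. real p powr of_int k * c v * ramp (v / real p powr of_int k) t)"
    proof (intro sum.cong refl)
      fix k
      have "real p powr of_int k > 0" using p1 by simp
      then show "ramp_comb V c (real p powr of_int k * t)
          = (\<Sum>v\<in>V. real p powr of_int k * c v * ramp (v / real p powr of_int k) t)"
        unfolding ramp_comb_def ramp_mult[OF \<open>real p powr of_int k > 0\<close>] by (simp add: mult_ac)
    qed
    finally show ?thesis by (simp add: sum.cartesian_product)
  qed
  then show ?thesis unfolding ramp_expansion_def using finF V(1) by (simp add: case_prod_beta)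
qed

lemma periodize_Kreal:
  assumes "\<And>v. v \<in> V \<Longrightarrow> c v \<in> Hp p"
  shows "periodize p y z (ramp_comb V c) \<in> Kreal p"
proof -
  have p0: "p > 0" using p1 by simp
  have "isCont (periodize p y z (ramp_comb V c)) t" if "t > 0" for t
    using ramp_expansion_isCont[OF periodize_ramp_expansion[of "t / 2" "2 * t"]] that by simp
  then have "continuous_on {0<..} (periodize p y z (ramp_comb V c))"
    by (intro continuous_at_imp_continuous_on) auto
  moreover have "\<exists>S. finite S \<and> a \<in> S \<and> b \<in> S \<and> S \<subseteq> {a..b} \<and>
      Hp_affine_on_gaps p S (periodize p y z (ramp_comb V c))" if "0 < a" "a < b" for a b
    by (rule ramp_expansion_Hp_affine_on_gaps[OF periodize_ramp_expansion[OF that] p0])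
      (use that assms in \<open>auto intro!: Hp_mult Hp_powr[OF p0]\<close>)
  ultimately show ?thesis
    unfolding Kreal_def pw_affine_Hp_iff using periodize_periodic by auto
qed

lemma Ord_at_periodize:
  assumes "x > 0"
  shows "Ord_at (periodize p y z (ramp_comb V c)) x
    = (\<Sum>v\<in>V. if \<exists>k::int. v = real p powr of_int k * x then c v * v else 0)"
proof -
  define F where "F = {k::int. y / (2 * x) \<le> real p powr of_int k \<and> real p powr of_int k \<le> z / (x / 2)}"
  have finF: "finite F" unfolding F_def using finite_powr_int_between p1 y0 assms by simp
  have exp: "ramp_expansion (x / 2) (2 * x) (periodize p y z (ramp_comb V c)) 0 0 (F \<times> V)
      (\<lambda>(k, v). real p powr of_int k * c v) (\<lambda>(k, v). v / real p powr of_int k)"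
    unfolding F_def using assms by (intro periodize_ramp_expansion) auto
  have "Ord_at (periodize p y z (ramp_comb V c)) x
      = x * (\<Sum>j\<in>F \<times> V. if (case j of (k, v) \<Rightarrow> v / real p powr of_int k) = x
                          then (case j of (k, v) \<Rightarrow> real p powr of_int k * c v) else 0)"
    by (rule Ord_at_ramp_expansion[OF exp]) (use assms in auto)
  also have "\<dots> = (\<Sum>(k, v)\<in>F \<times> V. if v = real p powr of_int k * x then c v * v else 0)"
    unfolding sum_distrib_left using p1 by (intro sum.cong refl) (auto simp: field_simps)
  also have "\<dots> = (\<Sum>v\<in>V. \<Sum>k\<in>F. if v = real p powr of_int k * x then c v * v else 0)"
    unfolding sum.cartesian_product[symmetric] by (rule sum.swap)
  also have "\<dots> = (\<Sum>v\<in>V. if \<exists>k::int. v = real p powr of_int k * x then c v * v else 0)"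
  proof (rule sum.cong[OF refl])
    fix v assume "v \<in> V"
    then have v: "y \<le> v" "v \<le> z" using V by auto
    show "(\<Sum>k\<in>F. if v = real p powr of_int k * x then c v * v else 0)
        = (if \<exists>k::int. v = real p powr of_int k * x then c v * v else 0)"
    proof (rule sum_if_unique[OF finF])
      show "k = k'" if "v = real p powr of_int k * x" "v = real p powr of_int k' * x" for k k'
        using that assms p1 by (simp add: powr_inj)
      show "k \<in> F" if "v = real p powr of_int k * x" for k
        using that v assms y0 unfolding F_def by (auto simp: field_simps)
    qed
  qed
  finally show ?thesis .
qed

lemma pdiv_periodize:
  assumes "prime p" "G \<in> Cp p"
  shows "pdiv p (periodize p y z (ramp_comb V c)) G = (\<Sum>v\<in>V. if Cp_point p v = G then c v * v else 0)"
proof -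
  define x where "x = rep p G"
  have x: "x > 0" "Cp_point p x = G" unfolding x_def using rep_pos Cp_point_rep assms(2) by auto
  have "(\<exists>k::int. v = real p powr of_int k * x) \<longleftrightarrow> Cp_point p v = G" if "v \<in> V" for v
  proof -
    have "v > 0" using that V y0 by auto
    then show ?thesis using Cp_point_eq_iff[OF assms(1) x(1)] x(2) by metis
  qed
  then show ?thesis
    unfolding pdiv_def x_def[symmetric] using Ord_at_periodize[OF x(1)] assms(2) by simp
qed

end

definition tent_coeff :: "real \<Rightarrow> real \<Rightarrow> real \<Rightarrow> real \<Rightarrow> real \<Rightarrow> real" where
  "tent_coeff s r y u v = (if v = y then s else if v = u then - (s + r) else r)"

context
  fixes p :: nat and s r y u z :: real
  assumes p1: "real p > 1" and yuz: "0 < y" "y < u" "u < z" and balance: "s * (u - y) = r * (z - u)"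
begin

lemma tent_sums:
  "(\<Sum>v\<in>{y, u, z}. tent_coeff s r y u v) = 0" "(\<Sum>v\<in>{y, u, z}. tent_coeff s r y u v * v) = 0"
  using yuz balance unfolding tent_coeff_def by (simp_all add: algebra_simps)

lemma periodic_tent_Kreal:
  assumes "s \<in> Hp p" "r \<in> Hp p"
  shows "periodize p y z (ramp_comb {y, u, z} (tent_coeff s r y u)) \<in> Kreal p"
proof (rule periodize_Kreal[OF p1 yuz(1) _ _ tent_sums])
  have "- (s + r) \<in> Hp p" using assms p1 by (intro Hp_uminus Hp_add) auto
  then show "tent_coeff s r y u v \<in> Hp p" for v using assms unfolding tent_coeff_def by auto
qed (use yuz in auto)

lemma pdiv_periodic_tent:
  assumes "prime p" "G \<in> Cp p"
  shows "pdiv p (periodize p y z (ramp_comb {y, u, z} (tent_coeff s r y u))) G =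
    (if Cp_point p y = G then s * y else 0) + (if Cp_point p u = G then - (s + r) * u else 0)
      + (if Cp_point p z = G then r * z else 0)"
  using pdiv_periodize[OF p1 yuz(1) _ _ tent_sums assms] yuz unfolding tent_coeff_def by simp

end

lemma tent_parameters:
  assumes "p > 1" "0 < u" "u < z" "0 < a" "a < b"
  obtains s r y where "s \<in> Hp p" "r \<in> Hp p" "0 < s" "0 < r" "0 < y" "y < u"
    "s * (u - y) = r * (z - u)" "a < r * z" "(s + r) * u < b"
proof -
  have "a / z < b / z" using assms by (intro divide_strict_right_mono) auto
  then obtain r where r: "r \<in> Hp p" "a / z < r" "r < b / z" using Hp_dense[OF assms(1)] by blast
  have "0 < a / z" using assms by simp
  then have "r > 0" using r(2) by linarith
  moreover have "a < r * z" "r * z < b" using r assms(2,3) by (auto simp: field_simps)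
  ultimately have rz: "a < r * z" "r * z < b" "r > 0" by auto
  have "r * (z - u) / u < (b - r * u) / u"
    using rz assms by (intro divide_strict_right_mono) (auto simp: algebra_simps)
  then obtain s where s: "s \<in> Hp p" "r * (z - u) / u < s" "s < (b - r * u) / u"
    using Hp_dense[OF assms(1)] by blast
  have su: "r * (z - u) < s * u" "s * u < b - r * u" using s(2,3) assms(2) by (simp_all add: field_simps)
  have "0 < r * (z - u)" using rz(3) assms by simp
  then have "0 < s * u" using su(1) by linarith
  then have "s > 0" using assms(2) by (simp add: zero_less_mult_iff)
  define y where "y = u - r * (z - u) / s"
  have "0 < y" "y < u" "s * (u - y) = r * (z - u)"
    unfolding y_def using su(1) rz(3) assms(3) \<open>s > 0\<close> by (auto simp: field_simps)
  then show ?thesis using that r(1) s(1) \<open>s > 0\<close> rz su(2) by (simp add: algebra_simps)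
qed

text \<open>The periodized tent with kinks at \<open>y < u < z\<close>, where \<open>u\<close> represents \<open>H'\<close> and \<open>z\<close> represents \<open>H\<close>,
  has divisor \<open>s y [y] - (s + r) u [u] + r z [z]\<close>; the parameters make \<open>r z\<close> just above \<open>a\<close>
  and \<open>(s + r) u\<close> below \<open>b\<close>.\<close>

lemma Kreal_pdiv_transfer:
  assumes "prime p" "H \<in> Cp p" "H' \<in> Cp p" "H \<noteq> H'" "0 < a" "a < b"
  shows "\<exists>f\<in>Kreal p. \<forall>G\<in>Cp p. pdiv p f G \<ge> (if G = H then a else 0) + (if G = H' then - b else 0)"
proof -
  have p1: "p > 1" "real p > 1" using assms(1) prime_gt_1_nat by auto
  define u where "u = rep p H'"
  have u: "u > 0" "Cp_point p u = H'" unfolding u_def using assms(3) rep_pos Cp_point_rep by auto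
  obtain m where m: "u / rep p H < real p ^ m" using real_arch_pow[OF p1(2)] by blast
  define z where "z = real p powr of_int (int m) * rep p H"
  have "Cp_point p z = H"
    unfolding z_def using Cp_point_powr_mult[of p "int m"] Cp_point_rep[OF assms(2)] p1 by simp
  moreover have "u < z" using m rep_pos[OF assms(2)] p1 unfolding z_def
    by (simp add: powr_realpow field_simps)
  ultimately have z: "Cp_point p z = H" "u < z" .
  obtain s r y where sry: "s \<in> Hp p" "r \<in> Hp p" "0 < s" "0 < r" "0 < y" "y < u"
      "s * (u - y) = r * (z - u)" "a < r * z" "(s + r) * u < b"
    using tent_parameters[OF p1(1) u(1) z(2) assms(5,6)] by blast
  define f where "f = periodize p y z (ramp_comb {y, u, z} (tent_coeff s r y u))"
  have "f \<in> Kreal p" unfolding f_def using periodic_tent_Kreal[OF p1(2) sry(5,6) z(2) sry(7,1,2)] .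
  moreover have "pdiv p f G \<ge> (if G = H then a else 0) + (if G = H' then - b else 0)" if "G \<in> Cp p" for G
  proof -
    define t where "t = (if Cp_point p y = G then s * y else 0)"
    have pd: "pdiv p f G = t + (if H' = G then - (s + r) * u else 0) + (if H = G then r * z else 0)"
      unfolding f_def t_def using pdiv_periodic_tent[OF p1(2) sry(5,6) z(2) sry(7) assms(1) that] u z by simp
    have "0 \<le> t" "0 \<le> (s + r) * u" unfolding t_def using sry u by simp_all
    then show ?thesis unfolding pd using sry(8,9) assms(5) by (auto simp: assms(4) not_sym[OF assms(4)] algebra_simps)
  qed
  ultimately show ?thesis by blast
qed

text \<open>Each \<open>H\<close> with \<open>D H < 0\<close> receives \<open>-D H \<cdot> D H' / B\<close> from each \<open>H'\<close> with \<open>D H' > 0\<close>, hence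
  \<open>-D H\<close> in total. Paying \<open>B / G\<close> times what it gives, \<open>H'\<close> spends exactly \<open>D H'\<close>; when \<open>deg D > 0\<close>
  this factor exceeds \<open>1\<close>, the slack needed for \<open>Kreal_pdiv_transfer\<close>. (If there are no negative
  points, \<open>G / G = 0\<close>.)\<close>

lemma transfer_weights_cover:
  fixes D :: "'a \<Rightarrow> real"
  defines "N \<equiv> {H. D H < 0}" and "P \<equiv> {H. D H > 0}"
  defines "B \<equiv> (\<Sum>H\<in>P. D H)" and "G \<equiv> (\<Sum>H\<in>N. - D H)"
  assumes "finite {H. D H \<noteq> 0}" "B > 0"
  shows "D X + (\<Sum>(H, H')\<in>N \<times> P. (if X = H then - D H * D H' / B else 0)
                                  + (if X = H' then D H * D H' / G else 0)) \<ge> 0"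
proof -
  have fin: "finite N" "finite P"
    using assms(5) unfolding N_def P_def by (auto intro: rev_finite_subset)
  have "(\<Sum>H'\<in>P. - D H * D H' / B) = - D H * B / B" for H
    unfolding B_def by (simp add: sum_distrib_left sum_divide_distrib)
  then have "(\<Sum>H'\<in>P. if X = H then - D H * D H' / B else 0) = (if X = H then - D H else 0)" for H
    using assms(6) by simp
  then have recv: "(\<Sum>(H, H')\<in>N \<times> P. if X = H then - D H * D H' / B else 0) = (if X \<in> N then - D X else 0)"
    unfolding sum.cartesian_product[symmetric] using fin by (simp add: sum.delta)
  have "(\<Sum>H\<in>N. D H * D H' / G) = (\<Sum>H\<in>N. D H) * D H' / G" for H'
    by (simp add: sum_distrib_right sum_divide_distrib)
  moreover have "(\<Sum>H\<in>N. D H) = - G" unfolding G_def by (simp add: sum_negf)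
  ultimately have "(\<Sum>H\<in>N. D H * D H' / G) = - (G / G) * D H'" for H' by simp
  then have col: "(\<Sum>H\<in>N. if X = H' then D H * D H' / G else 0) = (if X = H' then - (G / G) * D H' else 0)" for H'
    by simp
  have "(\<Sum>(H, H')\<in>N \<times> P. if X = H' then D H * D H' / G else 0)
      = (\<Sum>H'\<in>P. \<Sum>H\<in>N. if X = H' then D H * D H' / G else 0)"
    unfolding sum.cartesian_product[symmetric] by (rule sum.swap)
  also have "\<dots> = (\<Sum>H'\<in>P. if X = H' then - (G / G) * D H' else 0)"
    unfolding col ..
  also have "\<dots> = (if X \<in> P then - (G / G) * D X else 0)"
    using fin by (simp only: sum.delta')
  finally have pay: "(\<Sum>(H, H')\<in>N \<times> P. if X = H' then D H * D H' / G else 0)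
      = (if X \<in> P then - (G / G) * D X else 0)" .
  have surplus: "D X - (G / G) * D X \<ge> 0" if "X \<in> P" using that unfolding P_def by (cases "G = 0") auto
  have distrib: "(\<Sum>(H, H')\<in>N \<times> P. (if X = H then - D H * D H' / B else 0)
                                  + (if X = H' then D H * D H' / G else 0))
      = (\<Sum>(H, H')\<in>N \<times> P. if X = H then - D H * D H' / B else 0)
        + (\<Sum>(H, H')\<in>N \<times> P. if X = H' then D H * D H' / G else 0)"
    unfolding split_def by (rule sum.distrib)
  show ?thesis unfolding distrib recv pay using surplus unfolding N_def P_def by auto
qed

section \<open>Divisors of positive degree\<close>

lemma pdiv_Kreal_sum_ge:
  assumes "prime p" "finite Q" "\<forall>q\<in>Q. F q \<in> Kreal p \<and> (\<forall>X\<in>Cp p. pdiv p (F q) X \<ge> g X q)"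
    and "X \<in> Cp p"
  shows "pdiv p (\<lambda>t. \<Sum>q\<in>Q. F q t) X \<ge> (\<Sum>q\<in>Q. g X q)"
proof -
  have "pdiv p (\<lambda>t. \<Sum>q\<in>Q. F q t) X = (\<Sum>q\<in>Q. pdiv p (F q) X)"
    by (intro pdiv_sum assms(1,2)) (use assms(3) in auto)
  also have "\<dots> \<ge> (\<Sum>q\<in>Q. g X q)" using assms(3,4) by (intro sum_mono) auto
  finally show ?thesis .
qed

lemma deg_eq_pos_minus_neg:
  assumes "finite {H. D H \<noteq> 0}"
  shows "deg D = (\<Sum>H\<in>{H. D H > 0}. D H) - (\<Sum>H\<in>{H. D H < 0}. - D H)"
proof -
  have fin: "finite {H. D H > 0}" "finite {H. D H < 0}"
    using assms by (auto intro: rev_finite_subset)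
  have "deg D = (\<Sum>H\<in>{H. D H > 0} \<union> {H. D H < 0}. D H)"
    using fin by (intro deg_eq_sum) auto
  also have "\<dots> = (\<Sum>H\<in>{H. D H > 0}. D H) + (\<Sum>H\<in>{H. D H < 0}. D H)"
    using fin by (intro sum.union_disjoint) auto
  finally show ?thesis by (simp add: sum_negf)
qed

lemma transfer_amounts:
  fixes D :: "real set \<Rightarrow> real"
  defines "B \<equiv> (\<Sum>H\<in>{H. D H > 0}. D H)" and "G \<equiv> (\<Sum>H\<in>{H. D H < 0}. - D H)"
  assumes "finite {H. D H \<noteq> 0}" "deg D > 0" "D H < 0" "D H' > 0"
  shows "0 < - D H * D H' / B" "- D H * D H' / B < - D H * D H' / G"
proof -
  have "- D H \<le> G" unfolding G_def using assms(3,5)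
    by (intro member_le_sum) (auto intro: rev_finite_subset)
  then have "0 < G" using assms(5) by linarith
  moreover have "deg D = B - G" unfolding B_def G_def using deg_eq_pos_minus_neg[OF assms(3)] .
  ultimately have "G < B" "0 < B" using assms(4) by auto
  moreover have m: "0 < - D H * D H'" using assms(5,6) by (simp add: mult_neg_pos)
  ultimately show "0 < - D H * D H' / B" "- D H * D H' / B < - D H * D H' / G"
    using divide_pos_pos[OF m \<open>0 < B\<close>] divide_strict_left_mono[OF \<open>G < B\<close> m] \<open>0 < G\<close>
    by simp_all
qed

lemma H0_nontrivial_if_deg_pos:
  assumes "prime p" "is_divisor p D" "deg D > 0"
  shows "H0 p D \<noteq> {\<lambda>_. -\<infinity>}"
proof -
  define N where "N = {H. D H < 0}"
  define P where "P = {H. D H > 0}"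
  define B where "B = (\<Sum>H\<in>P. D H)"
  define G where "G = (\<Sum>H\<in>N. - D H)"
  define bound where "bound X = (\<lambda>(H, H'). (if X = H then - D H * D H' / B else 0)
                                          + (if X = H' then D H * D H' / G else 0))" for X
  have fin: "finite {H. D H \<noteq> 0}" and supp: "{H. D H \<noteq> 0} \<subseteq> Cp p"
    using assms(2) unfolding is_divisor_def by auto
  have finNP: "finite (N \<times> P)" using fin unfolding N_def P_def by (auto intro: rev_finite_subset)
  have "0 \<le> G" unfolding G_def N_def by (intro sum_nonneg) auto
  then have "0 < B" using deg_eq_pos_minus_neg[OF fin] assms(3) unfolding B_def G_def N_def P_def by linarith
  have transfers: "\<forall>q\<in>N \<times> P. \<exists>f. f \<in> Kreal p \<and> (\<forall>X\<in>Cp p. pdiv p f X \<ge> bound X q)"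
  proof
    fix q assume "q \<in> N \<times> P"
    then obtain H H' where HH': "q = (H, H')" "D H < 0" "D H' > 0" unfolding N_def P_def by auto
    then have "H \<in> Cp p" "H' \<in> Cp p" "H \<noteq> H'" using supp by auto
    from Kreal_pdiv_transfer[OF assms(1) this transfer_amounts[OF fin assms(3) HH'(2,3)]]
    obtain f where "f \<in> Kreal p" "\<forall>X\<in>Cp p. pdiv p f X \<ge> (if X = H then - D H * D H' / B else 0)
        + (if X = H' then - (- D H * D H' / G) else 0)"
      unfolding B_def G_def N_def P_def by blast
    moreover have "(if X = H then - D H * D H' / B else 0) + (if X = H' then - (- D H * D H' / G) else 0)
        = bound X q" for X
      unfolding bound_def HH'(1) by simp
    ultimately show "\<exists>f. f \<in> Kreal p \<and> (\<forall>X\<in>Cp p. pdiv p f X \<ge> bound X q)" by auto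
  qed
  obtain tf where tf: "\<forall>q\<in>N \<times> P. tf q \<in> Kreal p \<and> (\<forall>X\<in>Cp p. pdiv p (tf q) X \<ge> bound X q)"
    using bchoice[OF transfers] by blast
  define f where "f = (\<lambda>t. \<Sum>q\<in>N \<times> P. tf q t)"
  have "f \<in> Kreal p"
    unfolding f_def by (intro Kreal_sum[OF finNP]) (use tf prime_gt_0_nat[OF assms(1)] in auto)
  have "D X + pdiv p f X \<ge> 0" if "X \<in> Cp p" for X
  proof -
    have "D X + (\<Sum>q\<in>N \<times> P. bound X q) \<ge> 0"
      unfolding bound_def N_def P_def B_def G_def
      by (rule transfer_weights_cover[OF fin]) (use \<open>0 < B\<close> in \<open>simp add: B_def P_def\<close>)
    then show ?thesis using pdiv_Kreal_sum_ge[OF assms(1) finNP tf that] unfolding f_def by linarith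
  qed
  then have "(\<lambda>x. ereal (f x)) \<in> H0 p D" unfolding H0_def using \<open>f \<in> Kreal p\<close> by blast
  moreover have "(\<lambda>x. ereal (f x)) \<noteq> (\<lambda>_. -\<infinity>)" by (simp add: fun_eq_iff)
  ultimately show ?thesis by blast
qed

theorem lemma5p13:
  fixes p :: nat and D :: "real set \<Rightarrow> real"
  assumes "prime p" and "is_divisor p D"
  shows "(deg D < 0 \<longrightarrow> H0 p D = {\<lambda>_. -\<infinity>}) \<and>
         (deg D > 0 \<longrightarrow> H0 p D \<noteq> {\<lambda>_. -\<infinity>})"
  using H0_trivial_if_deg_neg[OF assms] H0_nontrivial_if_deg_pos[OF assms] by blast

end
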